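(* Let $R=K[x_1,\ldots,x_n,x_{n+1}]$ over a field $K$, let $I\subset R$ be a monomial ideal with $\gcd(u,x_{n+1})=1$ for all $u\in\mathcal{G}(I)$, and let $\mathfrak{m}=(x_1,\ldots,x_{n+1})$. Let $h=fg$ where $f\neq1$ is a monomial of $R$, $g\in\mathcal{G}(I)$, and $\gcd(h,x_{n+1})=1$, and set $L:=x_{n+1}I+hR$. If $(x_1,\ldots,x_n)\in\mathrm{Ass}(R/I^t)$ for some $t\geq1$, then $\mathfrak{m}\in\mathrm{Ass}(R/L^{t+1})$.
   Context: $\mathcal{G}(I)$ denotes the unique minimal set of monomial generators of a monomial ideal $I$. *)

theory Defs
  imports "HOL-Library.Poly_Mapping"
begin

text \<open>Polynomials over a field 'k in variables x_1, x_2, ... : finitely supported maps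
from exponent vectors (nat \<Rightarrow>0 nat) to coefficients, with convolution product.
The ring R = K[x_1,...,x_{n+1}] is the subring of polynomials whose monomials
only involve the variables x_1, ..., x_{n+1}.\<close>

type_synonym 'k mpoly = "(nat \<Rightarrow>\<^sub>0 nat) \<Rightarrow>\<^sub>0 'k"

definition exps :: "nat \<Rightarrow> (nat \<Rightarrow>\<^sub>0 nat) set" where
  "exps N = {a. Poly_Mapping.keys a \<subseteq> {1..N}}"

definition PR :: "nat \<Rightarrow> ('k::field) mpoly set" where
  "PR N = {p. Poly_Mapping.keys p \<subseteq> exps N}"

definition mon :: "(nat \<Rightarrow>\<^sub>0 nat) \<Rightarrow> ('k::field) mpoly" where
  "mon a = Poly_Mapping.single a 1"

definition Var :: "nat \<Rightarrow> ('k::field) mpoly" where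
  "Var i = mon (Poly_Mapping.single i 1)"

definition monomials :: "nat \<Rightarrow> ('k::field) mpoly set" where
  "monomials N = {mon a | a. a \<in> exps N}"

definition is_ideal :: "nat \<Rightarrow> ('k::field) mpoly set \<Rightarrow> bool" where
  "is_ideal N I \<longleftrightarrow> I \<subseteq> PR N \<and> 0 \<in> I \<and> (\<forall>a\<in>I. \<forall>b\<in>I. a + b \<in> I)
      \<and> (\<forall>r\<in>PR N. \<forall>a\<in>I. r * a \<in> I)"

definition gen :: "nat \<Rightarrow> ('k::field) mpoly set \<Rightarrow> 'k mpoly set" where
  "gen N S = \<Inter> {I. is_ideal N I \<and> S \<subseteq> I}"

definition monomial_ideal :: "nat \<Rightarrow> ('k::field) mpoly set \<Rightarrow> bool" where
  "monomial_ideal N I \<longleftrightarrow> is_ideal N I \<and> I = gen N (I \<inter> monomials N)"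

definition mon_dvd :: "(nat \<Rightarrow>\<^sub>0 nat) \<Rightarrow> (nat \<Rightarrow>\<^sub>0 nat) \<Rightarrow> bool" where
  "mon_dvd a b \<longleftrightarrow> (\<forall>i. Poly_Mapping.lookup a i \<le> Poly_Mapping.lookup b i)"

definition mon_coprime :: "(nat \<Rightarrow>\<^sub>0 nat) \<Rightarrow> (nat \<Rightarrow>\<^sub>0 nat) \<Rightarrow> bool" where
  "mon_coprime a b \<longleftrightarrow> (\<forall>i. min (Poly_Mapping.lookup a i) (Poly_Mapping.lookup b i) = 0)"

definition mingens :: "nat \<Rightarrow> ('k::field) mpoly set \<Rightarrow> 'k mpoly set" where
  "mingens N I = {mon a | a. a \<in> exps N \<and> mon a \<in> I \<and>
      (\<forall>b\<in>exps N. mon b \<in> I \<longrightarrow> mon_dvd b a \<longrightarrow> b = a)}"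

definition ideal_prod :: "nat \<Rightarrow> ('k::field) mpoly set \<Rightarrow> 'k mpoly set \<Rightarrow> 'k mpoly set" where
  "ideal_prod N I J = gen N {a * b | a b. a \<in> I \<and> b \<in> J}"

fun ideal_pow :: "nat \<Rightarrow> ('k::field) mpoly set \<Rightarrow> nat \<Rightarrow> 'k mpoly set" where
  "ideal_pow N I 0 = PR N"
| "ideal_pow N I (Suc t) = ideal_prod N (ideal_pow N I t) I"

definition prime_ideal :: "nat \<Rightarrow> ('k::field) mpoly set \<Rightarrow> bool" where
  "prime_ideal N P \<longleftrightarrow> is_ideal N P \<and> P \<noteq> PR N \<and>
     (\<forall>a\<in>PR N. \<forall>b\<in>PR N. a * b \<in> P \<longrightarrow> a \<in> P \<or> b \<in> P)"

text \<open>Ass(R/J): prime ideals of R of the form (J : r) = Ann(r + J) for some r in R.\<close>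
definition Ass :: "nat \<Rightarrow> ('k::field) mpoly set \<Rightarrow> 'k mpoly set set" where
  "Ass N J = {P. prime_ideal N P \<and> (\<exists>r\<in>PR N. P = {s\<in>PR N. s * r \<in> J})}"

end

(*
  Since no minimal generator of I involves x_e (e = n + 1), every power I^k is generated by
  x_e-free monomials, so deleting x_e from a monomial of I^k stays in I^k. Hence the associated
  prime (x_1, ..., x_n) of I^t has an x_e-free monomial witness x^g: x^g is not in I^t, but
  x_i x^g is for all i <= n. With h = x^a x^b, the monomial r = x_e^t x^g h is a socle element of
  R/L^(t+1): x_i r lies in L^(t+1) for i <= n because x_i x^g is in I^t, and x_e r does because
  x^a x^g is in I^t (a is nonzero and x_e-free) and x^b is in I. On the other hand every monomial
  of L^(t+1) is divisible by some x_e^k u h^(t+1-k) with u in I^k; if r were one of them,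
  comparing x_e-degrees gives k <= t, so u h^(t-k), an element of I^t, divides x_e^(t-k) x^g,
  and deleting x_e puts x^g in I^t. So (L^(t+1) : r) is the maximal ideal.
*)
theory Submission
  imports Defs
begin

abbreviation lookup where "lookup \<equiv> Poly_Mapping.lookup"
abbreviation keys where "keys \<equiv> Poly_Mapping.keys"
abbreviation single where "single \<equiv> Poly_Mapping.single"

lemma zero_in_exps [simp]: "0 \<in> exps N"
  by (simp add: exps_def)

lemma exps_add: "a \<in> exps N \<Longrightarrow> b \<in> exps N \<Longrightarrow> a + b \<in> exps N"
  unfolding exps_def using keys_add[of a b] by auto

lemma keys_subset_if_mon_dvd: "mon_dvd a b \<Longrightarrow> keys a \<subseteq> keys b"
  by (auto simp: mon_dvd_def in_keys_iff) (metis less_le_trans)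

lemma exps_if_mon_dvd: "mon_dvd a b \<Longrightarrow> b \<in> exps N \<Longrightarrow> a \<in> exps N"
  unfolding exps_def using keys_subset_if_mon_dvd by blast

lemma single_in_exps: "i \<in> {1..N} \<Longrightarrow> single i k \<in> exps N"
  by (simp add: exps_def)

lemma mon_dvd_refl: "mon_dvd a a"
  by (simp add: mon_dvd_def)

lemma mon_dvd_trans: "mon_dvd a b \<Longrightarrow> mon_dvd b c \<Longrightarrow> mon_dvd a c"
  unfolding mon_dvd_def using order_trans by blast

lemma mon_dvd_add_right: "mon_dvd a (a + b)"
  by (simp add: mon_dvd_def lookup_add)

lemma mon_dvd_iff_add: "mon_dvd a b \<longleftrightarrow> (\<exists>c. b = a + c)"
proof
  assume "mon_dvd a b"
  then have "b = a + (b - a)"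
    by (intro poly_mapping_eqI) (simp add: mon_dvd_def lookup_add lookup_minus)
  then show "\<exists>c. b = a + c" ..
qed (auto simp: mon_dvd_add_right)

lemma ex_single_mon_dvd:
  assumes "a \<noteq> 0" shows "\<exists>i\<in>keys a. mon_dvd (single i 1) a"
proof -
  obtain i where "lookup a i \<noteq> 0"
    using assms by (metis lookup_zero poly_mapping_eqI)
  then show ?thesis
    by (intro bexI[of _ i]) (auto simp: mon_dvd_def lookup_single when_def in_keys_iff)
qed

lemma mon_mult: "(mon a :: 'k::field mpoly) * mon b = mon (a + b)"
  by (simp add: mon_def mult_single)

lemma mon_0: "(mon 0 :: 'k::field mpoly) = 1"
  by (simp add: mon_def)

lemma keys_mon [simp]: "keys (mon a :: 'k::field mpoly) = {a}"
  by (simp add: mon_def)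

lemma mon_eq_iff [simp]: "(mon a :: 'k::field mpoly) = mon b \<longleftrightarrow> a = b"
  by (metis keys_mon singleton_inject)

lemma Var_power: "(Var e :: 'k::field mpoly) ^ k = mon (single e k)"
  by (induction k) (auto simp: mon_0 Var_def mon_mult single_add[symmetric])

lemma PR_mult: "p \<in> PR N \<Longrightarrow> q \<in> PR N \<Longrightarrow> p * q \<in> PR N"
  unfolding PR_def using keys_mult[of p q] exps_add by fastforce

lemma PR_add: "p \<in> PR N \<Longrightarrow> q \<in> PR N \<Longrightarrow> p + q \<in> PR N"
  unfolding PR_def using keys_add[of p q] by fastforce

lemma PR_diff: "p \<in> PR N \<Longrightarrow> q \<in> PR N \<Longrightarrow> (p :: 'k::field mpoly) - q \<in> PR N"
  unfolding PR_def using keys_add[of p "- q"] by (fastforce simp: keys_minus)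

lemma mon_in_PR_iff [simp]: "(mon a :: 'k::field mpoly) \<in> PR N \<longleftrightarrow> a \<in> exps N"
  by (simp add: PR_def)

lemma const_in_PR: "(single 0 c :: 'k::field mpoly) \<in> PR N"
  by (simp add: PR_def)

lemma zero_in_PR: "(0 :: 'k::field mpoly) \<in> PR N"
  by (simp add: PR_def)

lemma one_in_PR: "(1 :: 'k::field mpoly) \<in> PR N"
  by (simp add: PR_def)

lemma PR_power: "p \<in> PR N \<Longrightarrow> (p :: 'k::field mpoly) ^ k \<in> PR N"
  by (induction k) (auto intro: PR_mult one_in_PR)

lemma Var_in_PR: "i \<in> {1..N} \<Longrightarrow> (Var i :: 'k::field mpoly) \<in> PR N"
  by (simp add: Var_def single_in_exps)

lemma keys_in_exps: "p \<in> PR N \<Longrightarrow> \<alpha> \<in> keys p \<Longrightarrow> \<alpha> \<in> exps N"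
  by (auto simp: PR_def)

lemma is_ideal_PR: "is_ideal N (PR N)"
  unfolding is_ideal_def by (blast intro: PR_mult PR_add zero_in_PR)

lemma ideal_subset_PR: "is_ideal N J \<Longrightarrow> J \<subseteq> PR N"
  by (simp add: is_ideal_def)

lemma exps_if_mon_in_ideal: "is_ideal N J \<Longrightarrow> (mon \<delta> :: 'k::field mpoly) \<in> J \<Longrightarrow> \<delta> \<in> exps N"
  using mon_in_PR_iff by (blast dest: ideal_subset_PR)

lemma ideal_mult_left: "is_ideal N J \<Longrightarrow> r \<in> PR N \<Longrightarrow> a \<in> J \<Longrightarrow> r * a \<in> J"
  by (simp add: is_ideal_def)

lemma ideal_add: "is_ideal N J \<Longrightarrow> a \<in> J \<Longrightarrow> b \<in> J \<Longrightarrow> a + b \<in> J"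
  by (simp add: is_ideal_def)

lemma ideal_sum: "is_ideal N J \<Longrightarrow> (\<And>x. x \<in> A \<Longrightarrow> f x \<in> J) \<Longrightarrow> sum f A \<in> J"
  by (induction A rule: infinite_finite_induct) (auto simp: is_ideal_def)

lemma gen_subset: "S \<subseteq> gen N S"
  unfolding gen_def by blast

lemma gen_least: "is_ideal N J \<Longrightarrow> S \<subseteq> J \<Longrightarrow> gen N S \<subseteq> J"
  unfolding gen_def by blast

lemma is_ideal_gen:
  assumes "S \<subseteq> PR N" shows "is_ideal N (gen N S)"
  unfolding is_ideal_def
proof (intro conjI ballI)
  show "gen N S \<subseteq> PR N"
    using gen_least[OF is_ideal_PR assms] .
qed (auto simp: gen_def is_ideal_def)

lemma is_ideal_ideal_pow: "is_ideal N I \<Longrightarrow> is_ideal N (ideal_pow N I k)"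
proof (induction k)
  case (Suc k)
  then show ?case
    unfolding ideal_pow.simps ideal_prod_def
    by (intro is_ideal_gen) (blast intro: PR_mult dest: ideal_subset_PR)
qed (simp add: is_ideal_PR)

lemma ideal_pow_Suc_mult: "p \<in> ideal_pow N I k \<Longrightarrow> q \<in> I \<Longrightarrow> p * q \<in> ideal_pow N I (Suc k)"
  unfolding ideal_pow.simps ideal_prod_def by (rule subsetD[OF gen_subset]) blast

lemma is_ideal_colon: "is_ideal N J \<Longrightarrow> r \<in> PR N \<Longrightarrow> is_ideal N {s \<in> PR N. s * r \<in> J}"
  unfolding is_ideal_def by (auto simp: PR_add PR_mult distrib_right mult.assoc)

text \<open>The induction step goes through the colon ideal (L^(k+1) : c^(k+1)), which contains
  the generators of I^(k+1).\<close>
lemma ideal_pow_mult_power: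
  assumes "is_ideal N I" "is_ideal N L" "c \<in> PR N" "\<And>q. q \<in> I \<Longrightarrow> c * q \<in> L"
  shows "p \<in> ideal_pow N I k \<Longrightarrow> c ^ k * p \<in> ideal_pow N L k"
proof (induction k arbitrary: p)
  case (Suc k)
  let ?C = "{s \<in> PR N. s * c ^ Suc k \<in> ideal_pow N L (Suc k)}"
  have "is_ideal N ?C"
    using assms by (intro is_ideal_colon is_ideal_ideal_pow PR_power)
  moreover have "p' * q \<in> ?C" if "p' \<in> ideal_pow N I k" "q \<in> I" for p' q
  proof -
    have "(c ^ k * p') * (c * q) \<in> ideal_pow N L (Suc k)"
      using Suc.IH[OF that(1)] assms(4)[OF that(2)] by (rule ideal_pow_Suc_mult)
    moreover have "p' * q \<in> PR N"
      using that assms(1) is_ideal_ideal_pow by (blast intro: PR_mult dest: ideal_subset_PR)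
    ultimately show ?thesis by (simp add: ac_simps)
  qed
  ultimately have "gen N {p' * q | p' q. p' \<in> ideal_pow N I k \<and> q \<in> I} \<subseteq> ?C"
    by (intro gen_least) auto
  then have "ideal_pow N I (Suc k) \<subseteq> ?C"
    by (simp only: ideal_pow.simps ideal_prod_def)
  with Suc.prems show ?case by (auto simp: mult.commute)
qed simp

lemma mon_in_ideal_if_mon_dvd:
  assumes "is_ideal N J" "(mon \<alpha> :: 'k::field mpoly) \<in> J" "\<beta> \<in> exps N" "mon_dvd \<alpha> \<beta>"
  shows "(mon \<beta> :: 'k mpoly) \<in> J"
proof -
  obtain \<gamma> where \<beta>: "\<beta> = \<alpha> + \<gamma>"
    using assms(4) mon_dvd_iff_add by blast
  then have "\<gamma> \<in> exps N"
    using assms(3) exps_if_mon_dvd mon_dvd_add_right by (metis add.commute)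
  then have "mon \<gamma> * mon \<alpha> \<in> J"
    using assms(1,2) by (simp add: ideal_mult_left)
  then show ?thesis by (simp add: \<beta> mon_mult add.commute)
qed

lemma in_ideal_if_keys:
  assumes "is_ideal N J" "\<And>\<alpha>. \<alpha> \<in> keys p \<Longrightarrow> (mon \<alpha> :: 'k::field mpoly) \<in> J"
  shows "p \<in> J"
proof -
  have "p = (\<Sum>\<alpha>\<in>keys p. single 0 (lookup p \<alpha>) * mon \<alpha>)"
    by (intro poly_mapping_eqI)
       (auto simp: lookup_sum mon_def mult_single lookup_single when_def in_keys_iff)
  also have "\<dots> \<in> J"
    using assms by (intro ideal_sum) (auto intro: ideal_mult_left const_in_PR)
  finally show ?thesis .
qed

section \<open>Monomial ideals described by supports\<close>

definition mon_ideal :: "nat \<Rightarrow> (nat \<Rightarrow>\<^sub>0 nat) set \<Rightarrow> 'k::field mpoly set" where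
  "mon_ideal N A = {p. \<forall>\<delta>\<in>keys p. \<delta> \<in> exps N \<and> (\<exists>\<alpha>\<in>A. mon_dvd \<alpha> \<delta>)}"

lemma is_ideal_mon_ideal: "is_ideal N (mon_ideal N A :: 'k::field mpoly set)"
  unfolding is_ideal_def
proof (intro conjI ballI)
  fix r a :: "'k mpoly" assume r: "r \<in> PR N" and a: "a \<in> mon_ideal N A"
  have "\<rho> + \<delta> \<in> exps N \<and> (\<exists>\<alpha>\<in>A. mon_dvd \<alpha> (\<rho> + \<delta>))" if \<rho>: "\<rho> \<in> keys r" and \<delta>: "\<delta> \<in> keys a" for \<rho> \<delta>
  proof -
    obtain \<alpha> where "\<alpha> \<in> A" "mon_dvd \<alpha> \<delta>" "\<delta> \<in> exps N"
      using a \<delta> by (auto simp: mon_ideal_def)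
    moreover have "mon_dvd \<delta> (\<rho> + \<delta>)"
      by (simp add: mon_dvd_def lookup_add)
    ultimately show ?thesis
      using keys_in_exps[OF r \<rho>] by (blast intro: exps_add mon_dvd_trans)
  qed
  then show "r * a \<in> mon_ideal N A"
    using keys_mult[of r a] unfolding mon_ideal_def by blast
next
  fix a b :: "'k mpoly" assume "a \<in> mon_ideal N A" "b \<in> mon_ideal N A"
  then show "a + b \<in> mon_ideal N A"
    using keys_add[of a b] unfolding mon_ideal_def by blast
qed (auto simp: mon_ideal_def PR_def)

lemma mon_ideal_mono:
  assumes "\<And>\<alpha>. \<alpha> \<in> A \<Longrightarrow> \<exists>\<beta>\<in>B. mon_dvd \<beta> \<alpha>"
  shows "(mon_ideal N A :: 'k::field mpoly set) \<subseteq> mon_ideal N B"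
proof (rule subsetI)
  fix p :: "'k mpoly" assume "p \<in> mon_ideal N A"
  have "\<delta> \<in> exps N \<and> (\<exists>\<beta>\<in>B. mon_dvd \<beta> \<delta>)" if \<delta>: "\<delta> \<in> keys p" for \<delta>
  proof -
    obtain \<alpha> where "\<alpha> \<in> A" "mon_dvd \<alpha> \<delta>" "\<delta> \<in> exps N"
      using \<open>p \<in> mon_ideal N A\<close> \<delta> unfolding mon_ideal_def by blast
    moreover obtain \<beta> where "\<beta> \<in> B" "mon_dvd \<beta> \<alpha>"
      using assms \<open>\<alpha> \<in> A\<close> by blast
    ultimately show ?thesis
      using mon_dvd_trans by blast
  qed
  then show "p \<in> mon_ideal N B"
    by (simp add: mon_ideal_def)
qed

lemma ideal_prod_subset_mon_ideal:
  assumes "J \<subseteq> mon_ideal N A" "K \<subseteq> mon_ideal N B"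
  shows "ideal_prod N J K \<subseteq> mon_ideal N {\<alpha> + \<beta> | \<alpha> \<beta>. \<alpha> \<in> A \<and> \<beta> \<in> B}"
  unfolding ideal_prod_def
proof (intro gen_least[OF is_ideal_mon_ideal] subsetI, clarify)
  fix p q assume "p \<in> J" "q \<in> K"
  then have p: "p \<in> mon_ideal N A" and q: "q \<in> mon_ideal N B"
    using assms by blast+
  have "\<gamma> \<in> exps N \<and> (\<exists>\<gamma>'\<in>{\<alpha> + \<beta> | \<alpha> \<beta>. \<alpha> \<in> A \<and> \<beta> \<in> B}. mon_dvd \<gamma>' \<gamma>)"
    if "\<gamma> \<in> keys (p * q)" for \<gamma>
  proof -
    obtain \<delta> \<epsilon> where \<gamma>: "\<gamma> = \<delta> + \<epsilon>" "\<delta> \<in> keys p" "\<epsilon> \<in> keys q"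
      using keys_mult[of p q] \<open>\<gamma> \<in> keys (p * q)\<close> by blast
    then obtain \<alpha> \<beta> where "\<alpha> \<in> A" "mon_dvd \<alpha> \<delta>" "\<beta> \<in> B" "mon_dvd \<beta> \<epsilon>" "\<delta> \<in> exps N" "\<epsilon> \<in> exps N"
      using p q unfolding mon_ideal_def by blast
    moreover from this have "mon_dvd (\<alpha> + \<beta>) \<gamma>"
      by (simp add: \<gamma> mon_dvd_def lookup_add add_mono)
    ultimately show ?thesis
      using exps_add \<gamma>(1) by blast
  qed
  then show "p * q \<in> mon_ideal N {\<alpha> + \<beta> | \<alpha> \<beta>. \<alpha> \<in> A \<and> \<beta> \<in> B}"
    unfolding mon_ideal_def by blast
qed

lemma ideal_pow_subset_mon_ideal:
  assumes "I \<subseteq> mon_ideal N B" "0 \<in> A 0"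
    and "\<And>j \<alpha> \<beta>. \<alpha> \<in> A j \<Longrightarrow> \<beta> \<in> B \<Longrightarrow> \<alpha> + \<beta> \<in> A (Suc j)"
  shows "ideal_pow N I j \<subseteq> mon_ideal N (A j)"
proof (induction j)
  case 0
  have "mon_dvd 0 \<delta>" for \<delta>
    by (simp add: mon_dvd_def)
  then show ?case
    using assms(2) by (auto simp: mon_ideal_def PR_def)
next
  case (Suc j)
  have "ideal_pow N I (Suc j) \<subseteq> mon_ideal N {\<alpha> + \<beta> | \<alpha> \<beta>. \<alpha> \<in> A j \<and> \<beta> \<in> B}"
    using Suc.IH assms(1) by (simp add: ideal_prod_subset_mon_ideal)
  also have "\<dots> \<subseteq> mon_ideal N (A (Suc j))"
  proof (rule mon_ideal_mono)
    fix \<gamma> assume "\<gamma> \<in> {\<alpha> + \<beta> | \<alpha> \<beta>. \<alpha> \<in> A j \<and> \<beta> \<in> B}"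
    then have "\<gamma> \<in> A (Suc j)"
      using assms(3) by blast
    then show "\<exists>\<beta>\<in>A (Suc j). mon_dvd \<beta> \<gamma>"
      using mon_dvd_refl ..
  qed
  finally show ?case .
qed

lemma monomial_ideal_subset_mon_ideal:
  assumes "monomial_ideal N I"
  shows "I \<subseteq> mon_ideal N {\<alpha>. mon \<alpha> \<in> I}"
proof -
  have "I \<inter> monomials N \<subseteq> mon_ideal N {\<alpha>. mon \<alpha> \<in> I}"
    using mon_dvd_refl by (auto simp: monomials_def mon_ideal_def)
  then have "gen N (I \<inter> monomials N) \<subseteq> mon_ideal N {\<alpha>. mon \<alpha> \<in> I}"
    by (rule gen_least[OF is_ideal_mon_ideal])
  with assms show ?thesis
    by (simp add: monomial_ideal_def)
qed

lemma mon_in_monomial_ideal_if_keys: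
  assumes "monomial_ideal N I" "p \<in> I" "\<delta> \<in> keys p"
  shows "mon \<delta> \<in> I"
proof -
  obtain \<alpha> where "mon \<alpha> \<in> I" "mon_dvd \<alpha> \<delta>" "\<delta> \<in> exps N"
    using monomial_ideal_subset_mon_ideal[OF assms(1)] assms(2,3) unfolding mon_ideal_def by blast
  with assms(1) show ?thesis
    unfolding monomial_ideal_def using mon_in_ideal_if_mon_dvd by blast
qed

section \<open>Deleting the variable x_e from monomials\<close>

lemma mon_coprime_single_iff: "mon_coprime c (single e 1) \<longleftrightarrow> lookup c e = 0"
proof
  assume "mon_coprime c (single e 1)"
  then have "min (lookup c e) 1 = 0"
    unfolding mon_coprime_def by (metis lookup_single_eq)
  then show "lookup c e = 0"
    by simp
qed (auto simp: mon_coprime_def lookup_single when_def)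

lemma mon_dvd_update_self: "mon_dvd (Poly_Mapping.update e 0 \<delta>) \<delta>"
  by (simp add: mon_dvd_def lookup_update)

lemma mon_dvd_update: "lookup u e = 0 \<Longrightarrow> mon_dvd u \<delta> \<Longrightarrow> mon_dvd u (Poly_Mapping.update e 0 \<delta>)"
  by (simp add: mon_dvd_def lookup_update)

lemma sum_lookup_less_if_mon_dvd:
  assumes "mon_dvd b c" "b \<noteq> c" "c \<in> exps N"
  shows "sum (lookup b) {1..N} < sum (lookup c) {1..N}"
proof -
  obtain i where "lookup b i \<noteq> lookup c i"
    using assms(2) poly_mapping_eqI by metis
  with assms(1) have lt: "lookup b i < lookup c i"
    by (simp add: mon_dvd_def le_neq_trans)
  then have "i \<in> keys c"
    by (simp add: in_keys_iff)
  then have "i \<in> {1..N}"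
    using assms(3) by (auto simp: exps_def)
  with lt assms(1) show ?thesis
    by (intro sum_strict_mono_ex1) (auto simp: mon_dvd_def)
qed

lemma ex_mingens_mon_dvd:
  assumes "(mon \<delta> :: 'k::field mpoly) \<in> I" "\<delta> \<in> exps N"
  shows "\<exists>c. (mon c :: 'k mpoly) \<in> mingens N I \<and> mon_dvd c \<delta>"
proof -
  define A where "A = {c \<in> exps N. (mon c :: 'k mpoly) \<in> I \<and> mon_dvd c \<delta>}"
  have "\<delta> \<in> A"
    using assms mon_dvd_refl by (simp add: A_def)
  then obtain c where c: "c \<in> A" and least: "\<And>c'. c' \<in> A \<Longrightarrow> sum (lookup c) {1..N} \<le> sum (lookup c') {1..N}"
    using ex_has_least_nat[of "\<lambda>c. c \<in> A" \<delta> "\<lambda>c. sum (lookup c) {1..N}"] by blast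
  have "b = c" if "b \<in> exps N" "(mon b :: 'k mpoly) \<in> I" "mon_dvd b c" for b
  proof (rule ccontr)
    assume "b \<noteq> c"
    moreover have "b \<in> A"
      using that c mon_dvd_trans by (auto simp: A_def)
    ultimately show False
      using least sum_lookup_less_if_mon_dvd[OF that(3)] c by (force simp: A_def)
  qed
  with c show ?thesis
    unfolding mingens_def A_def by blast
qed

lemma mon_update_in_ideal:
  fixes I :: "'k::field mpoly set"
  assumes "is_ideal N I" "\<forall>c. mon c \<in> (mingens N I :: 'k mpoly set) \<longrightarrow> mon_coprime c (single e 1)"
    and "(mon \<delta> :: 'k mpoly) \<in> I" "\<delta> \<in> exps N"
  shows "(mon (Poly_Mapping.update e 0 \<delta>) :: 'k mpoly) \<in> I"
proof -
  obtain c where c: "(mon c :: 'k mpoly) \<in> mingens N I" "mon_dvd c \<delta>"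
    using ex_mingens_mon_dvd[OF assms(3,4)] by blast
  have "(mon c :: 'k mpoly) \<in> I"
    using c(1) by (auto simp: mingens_def)
  moreover have "lookup c e = 0"
    using assms(2) c(1) mon_coprime_single_iff by blast
  ultimately show ?thesis
    using assms(1) exps_if_mon_dvd[OF mon_dvd_update_self assms(4)] mon_dvd_update c(2)
    by (metis mon_in_ideal_if_mon_dvd)
qed

lemma ideal_pow_subset_mon_ideal_var_free:
  fixes I :: "'k::field mpoly set"
  assumes "monomial_ideal N I" "\<forall>c. mon c \<in> (mingens N I :: 'k mpoly set) \<longrightarrow> mon_coprime c (single e 1)"
  shows "ideal_pow N I j \<subseteq> mon_ideal N {u. (mon u :: 'k mpoly) \<in> ideal_pow N I j \<and> lookup u e = 0}"
proof (rule ideal_pow_subset_mon_ideal)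
  have I: "is_ideal N I"
    using assms(1) by (simp add: monomial_ideal_def)
  have "\<exists>\<beta>\<in>{u. (mon u :: 'k mpoly) \<in> I \<and> lookup u e = 0}. mon_dvd \<beta> \<alpha>"
    if \<alpha>: "(mon \<alpha> :: 'k mpoly) \<in> I" for \<alpha>
  proof (rule bexI[of _ "Poly_Mapping.update e 0 \<alpha>"])
    have "\<alpha> \<in> exps N"
      using exps_if_mon_in_ideal[OF I \<alpha>] .
    then show "Poly_Mapping.update e 0 \<alpha> \<in> {u. (mon u :: 'k mpoly) \<in> I \<and> lookup u e = 0}"
      using mon_update_in_ideal[OF I assms(2) \<alpha>] by (simp add: lookup_update)
  qed (rule mon_dvd_update_self)
  then have "(mon_ideal N {\<alpha>. (mon \<alpha> :: 'k mpoly) \<in> I} :: 'k mpoly set)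
      \<subseteq> mon_ideal N {u. (mon u :: 'k mpoly) \<in> I \<and> lookup u e = 0}"
    by (intro mon_ideal_mono) simp
  with monomial_ideal_subset_mon_ideal[OF assms(1)]
  show "I \<subseteq> mon_ideal N {u. (mon u :: 'k mpoly) \<in> I \<and> lookup u e = 0}"
    by (rule order_trans)
qed (auto simp: mon_0 one_in_PR lookup_add mon_mult[symmetric] simp del: ideal_pow.simps(2)
         intro: ideal_pow_Suc_mult)

lemma mon_update_in_ideal_pow:
  fixes I :: "'k::field mpoly set"
  assumes "monomial_ideal N I" "\<forall>c. mon c \<in> (mingens N I :: 'k mpoly set) \<longrightarrow> mon_coprime c (single e 1)"
    and "p \<in> ideal_pow N I j" "\<delta> \<in> keys p"
  shows "(mon (Poly_Mapping.update e 0 \<delta>) :: 'k mpoly) \<in> ideal_pow N I j"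
proof -
  obtain u where u: "(mon u :: 'k mpoly) \<in> ideal_pow N I j" "lookup u e = 0" "mon_dvd u \<delta>"
    and \<delta>: "\<delta> \<in> exps N"
    using ideal_pow_subset_mon_ideal_var_free[OF assms(1,2)] assms(3,4) unfolding mon_ideal_def by blast
  have "is_ideal N (ideal_pow N I j)"
    using assms(1) by (simp add: monomial_ideal_def is_ideal_ideal_pow)
  moreover have "Poly_Mapping.update e 0 \<delta> \<in> exps N"
    using exps_if_mon_dvd[OF mon_dvd_update_self \<delta>] .
  ultimately show ?thesis
    using u mon_in_ideal_if_mon_dvd mon_dvd_update by blast
qed

section \<open>Powers of L = x_e I + (h)\<close>

lemma lookup_mon_mult: "lookup (mon \<alpha> * (p :: 'k::field mpoly)) (\<alpha> + \<beta>) = lookup p \<beta>"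
  by (simp add: mon_def lookup_mult lookup_single when_mult)

lemma keys_mon_mult: "keys (mon \<alpha> * (p :: 'k::field mpoly)) = (\<lambda>\<beta>. \<alpha> + \<beta>) ` keys p"
proof (intro equalityI subsetI)
  fix \<gamma> assume "\<gamma> \<in> keys (mon \<alpha> * p)"
  then show "\<gamma> \<in> (\<lambda>\<beta>. \<alpha> + \<beta>) ` keys p"
    using keys_mult[of "mon \<alpha>" p] by auto
next
  fix \<gamma> assume "\<gamma> \<in> (\<lambda>\<beta>. \<alpha> + \<beta>) ` keys p"
  then show "\<gamma> \<in> keys (mon \<alpha> * p)"
    by (auto simp: in_keys_iff lookup_mon_mult)
qed

definition exp_scale :: "nat \<Rightarrow> (nat \<Rightarrow>\<^sub>0 nat) \<Rightarrow> (nat \<Rightarrow>\<^sub>0 nat)" where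
  "exp_scale m h = Poly_Mapping.map ((*) m) h"

lemma lookup_exp_scale [simp]: "lookup (exp_scale m h) i = m * lookup h i"
  by (simp add: exp_scale_def Poly_Mapping.map.rep_eq when_def)

lemma exp_scale_0 [simp]: "exp_scale 0 h = 0"
  by (intro poly_mapping_eqI) simp

lemma exp_scale_Suc [simp]: "exp_scale (Suc m) h = exp_scale m h + h"
  by (intro poly_mapping_eqI) (simp add: lookup_add)

definition L_ideal :: "nat \<Rightarrow> nat \<Rightarrow> 'k::field mpoly set \<Rightarrow> (nat \<Rightarrow>\<^sub>0 nat) \<Rightarrow> 'k mpoly set" where
  "L_ideal N e I h = gen N ((\<lambda>u. Var e * u) ` I \<union> {mon h})"

lemma is_ideal_L_ideal:
  assumes "is_ideal N I" "e \<in> {1..N}" "h \<in> exps N"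
  shows "is_ideal N (L_ideal N e I h)"
proof -
  have "(\<lambda>u. Var e * u) ` I \<subseteq> PR N"
    using PR_mult[OF Var_in_PR[OF assms(2)]] ideal_subset_PR[OF assms(1)] by blast
  then show ?thesis
    unfolding L_ideal_def using assms(3) by (intro is_ideal_gen) simp
qed

lemma mon_in_L_ideal: "mon h \<in> L_ideal N e I h"
  unfolding L_ideal_def by (rule subsetD[OF gen_subset]) simp

lemma Var_mult_in_L_ideal:
  assumes "q \<in> I" shows "Var e * q \<in> L_ideal N e I h"
  unfolding L_ideal_def using assms by (intro subsetD[OF gen_subset] UnI1 imageI)

lemma Var_power_mult_in_ideal_pow_L_ideal:
  assumes "is_ideal N I" "e \<in> {1..N}" "h \<in> exps N" "p \<in> ideal_pow N I k"
  shows "Var e ^ k * p \<in> ideal_pow N (L_ideal N e I h) k"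
  using assms is_ideal_L_ideal Var_in_PR Var_mult_in_L_ideal by (blast intro: ideal_pow_mult_power)

lemma mon_add_exp_scale_in_ideal_pow:
  assumes "(mon u :: 'k::field mpoly) \<in> ideal_pow N I k" "(mon h :: 'k mpoly) \<in> I"
  shows "(mon (u + exp_scale m h) :: 'k mpoly) \<in> ideal_pow N I (k + m)"
proof (induction m)
  case (Suc m)
  then show ?case
    using ideal_pow_Suc_mult[OF Suc.IH assms(2)] by (simp add: mon_mult add.assoc)
qed (simp add: assms(1))

lemma ideal_pow_L_ideal_subset:
  fixes I :: "'k::field mpoly set"
  assumes "monomial_ideal N I" "e \<in> {1..N}" "h \<in> exps N"
  shows "ideal_pow N (L_ideal N e I h) j \<subseteq> mon_ideal N
    {single e k + u + exp_scale (j - k) h | k u. k \<le> j \<and> (mon u :: 'k mpoly) \<in> ideal_pow N I k}"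
proof (rule ideal_pow_subset_mon_ideal[where B = "{single e 1 + u | u. (mon u :: 'k mpoly) \<in> I} \<union> {h}"])
  have "Var e * q \<in> mon_ideal N ({single e 1 + u | u. (mon u :: 'k mpoly) \<in> I} \<union> {h})" if "q \<in> I" for q
  proof -
    have "single e 1 + \<delta> \<in> exps N \<and>
        (\<exists>\<alpha>\<in>{single e 1 + u | u. (mon u :: 'k mpoly) \<in> I} \<union> {h}. mon_dvd \<alpha> (single e 1 + \<delta>))"
      if "\<delta> \<in> keys q" for \<delta>
    proof
      have "mon \<delta> \<in> I"
        using mon_in_monomial_ideal_if_keys[OF assms(1) \<open>q \<in> I\<close> that] .
      moreover from this have "\<delta> \<in> exps N"
        using assms(1) by (auto simp: monomial_ideal_def intro: exps_if_mon_in_ideal)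
      ultimately show "single e 1 + \<delta> \<in> exps N"
        "\<exists>\<alpha>\<in>{single e 1 + u | u. (mon u :: 'k mpoly) \<in> I} \<union> {h}. mon_dvd \<alpha> (single e 1 + \<delta>)"
        using mon_dvd_refl exps_add[OF single_in_exps[OF assms(2)]] by blast+
    qed
    then show ?thesis
      by (simp add: mon_ideal_def Var_def keys_mon_mult)
  qed
  moreover have "mon h \<in> mon_ideal N ({single e 1 + u | u. (mon u :: 'k mpoly) \<in> I} \<union> {h})"
    using assms(3) mon_dvd_refl by (simp add: mon_ideal_def)
  ultimately show "L_ideal N e I h \<subseteq> mon_ideal N ({single e 1 + u | u. (mon u :: 'k mpoly) \<in> I} \<union> {h})"
    unfolding L_ideal_def by (intro gen_least[OF is_ideal_mon_ideal]) blast
next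
  show "0 \<in> {single e k + u + exp_scale (0 - k) h | k u. k \<le> 0 \<and> (mon u :: 'k mpoly) \<in> ideal_pow N I k}"
    using mon_0 one_in_PR by force
next
  fix j \<alpha> \<beta>
  assume "\<alpha> \<in> {single e k + u + exp_scale (j - k) h | k u. k \<le> j \<and> (mon u :: 'k mpoly) \<in> ideal_pow N I k}"
  then obtain k u where \<alpha>: "\<alpha> = single e k + u + exp_scale (j - k) h"
    and k: "k \<le> j" and u: "(mon u :: 'k mpoly) \<in> ideal_pow N I k"
    by blast
  assume "\<beta> \<in> {single e 1 + u | u. (mon u :: 'k mpoly) \<in> I} \<union> {h}"
  then consider (x_e) v where "\<beta> = single e 1 + v" "(mon v :: 'k mpoly) \<in> I" | (h) "\<beta> = h"
    by blast
  then show "\<alpha> + \<beta> \<in> {single e k + u + exp_scale (Suc j - k) h | k u. k \<le> Suc j \<and> (mon u :: 'k mpoly) \<in> ideal_pow N I k}"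
  proof cases
    case x_e
    have "\<alpha> + \<beta> = single e (Suc k) + (u + v) + exp_scale (Suc j - Suc k) h"
      by (intro poly_mapping_eqI) (simp add: \<alpha> x_e(1) lookup_add lookup_single when_def)
    moreover have "(mon (u + v) :: 'k mpoly) \<in> ideal_pow N I (Suc k)"
      using ideal_pow_Suc_mult[OF u x_e(2)] by (simp add: mon_mult)
    ultimately show ?thesis
      using k by blast
  next
    case h
    have "\<alpha> + \<beta> = single e k + u + exp_scale (Suc j - k) h"
      using k by (simp add: \<alpha> h Suc_diff_le add.assoc)
    then show ?thesis
      using k u le_SucI by blast
  qed
qed

lemma mon_notin_ideal_pow_L_ideal:
  fixes I :: "'k::field mpoly set"
  assumes I: "monomial_ideal N I"
    and sat: "\<forall>c. mon c \<in> (mingens N I :: 'k mpoly set) \<longrightarrow> mon_coprime c (single e 1)"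
    and e: "e \<in> {1..N}" and h: "h \<in> exps N" "lookup h e = 0" "(mon h :: 'k mpoly) \<in> I"
    and g: "g \<in> exps N" "lookup g e = 0" "(mon g :: 'k mpoly) \<notin> ideal_pow N I t"
  shows "(mon (single e t + g + h) :: 'k mpoly) \<notin> ideal_pow N (L_ideal N e I h) (Suc t)"
proof
  assume "(mon (single e t + g + h) :: 'k mpoly) \<in> ideal_pow N (L_ideal N e I h) (Suc t)"
  then have "(mon (single e t + g + h) :: 'k mpoly) \<in> mon_ideal N
    {single e k + u + exp_scale (Suc t - k) h | k u. k \<le> Suc t \<and> (mon u :: 'k mpoly) \<in> ideal_pow N I k}"
    by (rule subsetD[OF ideal_pow_L_ideal_subset[OF I e h(1)]])
  then obtain k u where u: "(mon u :: 'k mpoly) \<in> ideal_pow N I k"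
    and dvd: "mon_dvd (single e k + u + exp_scale (Suc t - k) h) (single e t + g + h)"
    unfolding mon_ideal_def by auto
  have "lookup (single e k + u + exp_scale (Suc t - k) h) e \<le> lookup (single e t + g + h) e"
    using dvd by (simp add: mon_dvd_def)
  then have "k + lookup u e \<le> t"
    using h(2) g(2) by (simp add: lookup_add)
  then have k: "k \<le> t" "lookup u e \<le> t - k"
    by linarith+
  have "mon_dvd (u + exp_scale (t - k) h) (single e (t - k) + g)"
    unfolding mon_dvd_def
  proof
    fix i
    have "lookup (single e k + u + exp_scale (Suc t - k) h) i \<le> lookup (single e t + g + h) i"
      using dvd by (simp add: mon_dvd_def)
    then show "lookup (u + exp_scale (t - k) h) i \<le> lookup (single e (t - k) + g) i"
      using k h(2) g(2) by (cases "i = e") (auto simp: lookup_add lookup_single Suc_diff_le)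
  qed
  moreover have "(mon (u + exp_scale (t - k) h) :: 'k mpoly) \<in> ideal_pow N I t"
    using mon_add_exp_scale_in_ideal_pow[OF u h(3), of "t - k"] k by simp
  moreover have "is_ideal N (ideal_pow N I t)"
    using I by (simp add: monomial_ideal_def is_ideal_ideal_pow)
  ultimately have "(mon (single e (t - k) + g) :: 'k mpoly) \<in> ideal_pow N I t"
    using mon_in_ideal_if_mon_dvd exps_add[OF single_in_exps[OF e] g(1)] by blast
  then have "(mon (Poly_Mapping.update e 0 (single e (t - k) + g)) :: 'k mpoly) \<in> ideal_pow N I t"
    using mon_update_in_ideal_pow[OF I sat] by simp
  moreover have "Poly_Mapping.update e 0 (single e (t - k) + g) = g"
    using g(2) by (intro poly_mapping_eqI) (auto simp: lookup_update lookup_add lookup_single when_def)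
  ultimately show False
    using g(3) by simp
qed

lemma Var_mult_in_ideal_pow_L_ideal:
  assumes "is_ideal N I" "e \<in> {1..N}" "h \<in> exps N"
    and "mon (g + h) \<in> ideal_pow N I (Suc t)"
    and "i \<noteq> e \<Longrightarrow> mon (single i 1 + g) \<in> ideal_pow N I t"
  shows "Var i * mon (single e t + g + h) \<in> ideal_pow N (L_ideal N e I h) (Suc t)"
proof (cases "i = e")
  case True
  have "Var i * mon (single e t + g + h) = mon (single e (Suc t) + (g + h))"
    by (simp add: True Var_def mon_mult) (intro poly_mapping_eqI; simp add: lookup_add lookup_single when_def)
  also have "\<dots> = Var e ^ Suc t * mon (g + h)"
    by (simp only: Var_power mon_mult)
  finally show ?thesis
    using Var_power_mult_in_ideal_pow_L_ideal[OF assms(1-4)] by metis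
next
  case False
  have "Var i * mon (single e t + g + h) = (Var e ^ t * mon (single i 1 + g)) * mon h"
    by (simp only: Var_def[of i] Var_power mon_mult ac_simps)
  moreover have "Var e ^ t * mon (single i 1 + g) \<in> ideal_pow N (L_ideal N e I h) t"
    using Var_power_mult_in_ideal_pow_L_ideal[OF assms(1-3) assms(5)[OF False]] .
  ultimately show ?thesis
    using ideal_pow_Suc_mult mon_in_L_ideal by metis
qed

section \<open>The maximal ideal\<close>

lemma zero_eq_exps_add_iff: "0 = (\<alpha> :: nat \<Rightarrow>\<^sub>0 nat) + \<beta> \<longleftrightarrow> \<alpha> = 0 \<and> \<beta> = 0"
  by (metis add_is_0 lookup_add lookup_zero poly_mapping_eqI add_0)

lemma lookup_mult_0: "lookup (p * q) 0 = lookup p 0 * lookup (q :: 'k::field mpoly) 0"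
proof -
  have "lookup (p * q) 0 = (\<Sum>l. lookup p l * (lookup q 0 when l = 0))"
    unfolding lookup_mult
  proof (intro Sum_any.cong)
    fix l :: "nat \<Rightarrow>\<^sub>0 nat"
    show "lookup p l * (\<Sum>m. lookup q m when 0 = l + m) = lookup p l * (lookup q 0 when l = 0)"
      by (cases "l = 0") (simp_all add: zero_eq_exps_add_iff)
  qed
  also have "\<dots> = lookup p 0 * lookup q 0"
    by (simp add: mult_when)
  finally show ?thesis .
qed

lemma is_ideal_gen_Var: "is_ideal N (gen N {Var i | i. i \<in> {1..N}} :: 'k::field mpoly set)"
  by (intro is_ideal_gen) (auto intro: Var_in_PR)

lemma is_ideal_const_coeff_0: "is_ideal N {p \<in> PR N. lookup (p :: 'k::field mpoly) 0 = 0}"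
  unfolding is_ideal_def by (auto simp: PR_add PR_mult zero_in_PR lookup_add lookup_mult_0)

lemma gen_Var_eq_const_coeff_0:
  "(gen N {Var i | i. i \<in> {1..N}} :: 'k::field mpoly set) = {p \<in> PR N. lookup p 0 = 0}"
proof (intro equalityI)
  have "Var i \<in> {p \<in> PR N. lookup (p :: 'k mpoly) 0 = 0}" if "i \<in> {1..N}" for i
  proof -
    have "single i (1 :: nat) \<noteq> 0"
    proof
      assume "single i (1 :: nat) = 0"
      then have "lookup (single i (1 :: nat)) i = 0"
        by simp
      then show False
        by simp
    qed
    then show ?thesis
      using Var_in_PR[OF that] by (simp add: Var_def mon_def lookup_single)
  qed
  then have "{Var i | i. i \<in> {1..N}} \<subseteq> {p \<in> PR N. lookup (p :: 'k mpoly) 0 = 0}"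
    by blast
  then show "gen N {Var i | i. i \<in> {1..N}} \<subseteq> {p \<in> PR N. lookup (p :: 'k mpoly) 0 = 0}"
    by (rule gen_least[OF is_ideal_const_coeff_0])
next
  show "{p \<in> PR N. lookup p 0 = 0} \<subseteq> (gen N {Var i | i. i \<in> {1..N}} :: 'k mpoly set)"
  proof (rule subsetI, rule in_ideal_if_keys[OF is_ideal_gen_Var])
    fix p :: "'k mpoly" and \<alpha> assume p: "p \<in> {p \<in> PR N. lookup p 0 = 0}" and "\<alpha> \<in> keys p"
    then have \<alpha>: "\<alpha> \<noteq> 0" "\<alpha> \<in> exps N"
      by (auto simp: in_keys_iff intro: keys_in_exps)
    then obtain i where i: "i \<in> keys \<alpha>" "mon_dvd (single i 1) \<alpha>"
      using ex_single_mon_dvd by blast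
    then obtain \<gamma> where \<gamma>: "\<alpha> = single i 1 + \<gamma>"
      using mon_dvd_iff_add by blast
    have "\<gamma> \<in> exps N"
      using \<alpha>(2) exps_if_mon_dvd[of \<gamma> \<alpha>] by (simp add: \<gamma> mon_dvd_def lookup_add)
    moreover have "i \<in> {1..N}"
      using i(1) \<alpha>(2) by (auto simp: exps_def)
    then have "Var i \<in> gen N {Var i | i. i \<in> {1..N}}"
      by (intro subsetD[OF gen_subset]) blast
    ultimately have "mon \<gamma> * Var i \<in> (gen N {Var i | i. i \<in> {1..N}} :: 'k mpoly set)"
      by (intro ideal_mult_left[OF is_ideal_gen_Var]) simp_all
    then show "mon \<alpha> \<in> (gen N {Var i | i. i \<in> {1..N}} :: 'k mpoly set)"
      by (simp add: \<gamma> Var_def mon_mult add.commute)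
  qed
qed

lemma prime_ideal_gen_Var: "prime_ideal N (gen N {Var i | i. i \<in> {1..N}} :: 'k::field mpoly set)"
  unfolding prime_ideal_def
proof (intro conjI ballI impI)
  have "(1 :: 'k mpoly) \<notin> {p \<in> PR N. lookup p 0 = 0}"
    by simp
  then show "gen N {Var i | i. i \<in> {1..N}} \<noteq> (PR N :: 'k mpoly set)"
    unfolding gen_Var_eq_const_coeff_0 using one_in_PR by blast
qed (simp_all only: is_ideal_const_coeff_0 gen_Var_eq_const_coeff_0, auto simp: lookup_mult_0)

lemma ideal_diff: "is_ideal N J \<Longrightarrow> a \<in> J \<Longrightarrow> b \<in> J \<Longrightarrow> (a :: 'k::field mpoly) - b \<in> J"
  using ideal_add ideal_mult_left[OF _ PR_diff[OF zero_in_PR one_in_PR]] by fastforce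

lemma gen_Var_in_Ass:
  assumes J: "is_ideal N J" and r: "r \<in> PR N" "r \<notin> J" "\<And>i. i \<in> {1..N} \<Longrightarrow> Var i * r \<in> J"
  shows "gen N {Var i | i. i \<in> {1..N}} \<in> Ass N (J :: 'k::field mpoly set)"
proof -
  note M = gen_Var_eq_const_coeff_0[of N, where 'k = 'k]
  define C where "C = {s \<in> PR N. s * r \<in> J}"
  have C: "is_ideal N C"
    unfolding C_def by (rule is_ideal_colon[OF J r(1)])
  have "gen N {Var i | i. i \<in> {1..N}} \<subseteq> C"
    by (rule gen_least[OF C]) (auto simp: C_def Var_in_PR r(3))
  moreover have "C \<subseteq> gen N {Var i | i. i \<in> {1..N}}"
  proof
    fix s assume s: "s \<in> C"
    show "s \<in> gen N {Var i | i. i \<in> {1..N}}"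
    proof (rule ccontr)
      assume "s \<notin> gen N {Var i | i. i \<in> {1..N}}"
      then have c: "lookup s 0 \<noteq> 0"
        using s unfolding M C_def by simp
      have "s - single 0 (lookup s 0) \<in> gen N {Var i | i. i \<in> {1..N}}"
        using s unfolding M C_def by (simp add: PR_diff const_in_PR lookup_minus)
      then have "s - (s - single 0 (lookup s 0)) \<in> C"
        using \<open>gen N {Var i | i. i \<in> {1..N}} \<subseteq> C\<close> s by (blast intro: ideal_diff[OF C])
      then have "single 0 (inverse (lookup s 0)) * single 0 (lookup s 0) \<in> C"
        by (simp add: ideal_mult_left[OF C const_in_PR])
      then have "1 \<in> C"
        using c by (simp add: mult_single)
      then show False
        using r(2) by (simp add: C_def)
    qed
  qed
  ultimately show ?thesis
    unfolding Ass_def C_def using prime_ideal_gen_Var r(1) by blast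
qed

lemma Ass_obtains_witness:
  assumes "P \<in> Ass N J"
  obtains r where "r \<in> PR N" "r \<notin> J" "\<And>s. s \<in> P \<Longrightarrow> s * r \<in> J"
proof -
  obtain r where P: "prime_ideal N P" "r \<in> PR N" "P = {s \<in> PR N. s * r \<in> J}"
    using assms by (auto simp: Ass_def)
  have "r \<notin> J"
  proof
    assume "r \<in> J"
    then have "1 \<in> P"
      using P(3) one_in_PR by simp
    then have "s \<in> P" if "s \<in> PR N" for s
      using P(1) ideal_mult_left[of N P s 1] that by (simp add: prime_ideal_def)
    then show False
      using P(1) by (auto simp: prime_ideal_def is_ideal_def)
  qed
  with P that show ?thesis
    by blast
qed

section \<open>The socle element of R/L^(t+1)\<close>

lemma Ass_ideal_pow_obtains_var_free_witness:
  fixes I :: "'k::field mpoly set"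
  assumes I: "monomial_ideal N I"
    and sat: "\<forall>c. mon c \<in> (mingens N I :: 'k mpoly set) \<longrightarrow> mon_coprime c (single e 1)"
    and P: "P \<in> Ass N (ideal_pow N I t)" "\<And>i. i \<in> S \<Longrightarrow> i \<noteq> e \<Longrightarrow> Var i \<in> P"
  obtains g where "g \<in> exps N" "lookup g e = 0" "(mon g :: 'k mpoly) \<notin> ideal_pow N I t"
    "\<And>i. i \<in> S \<Longrightarrow> i \<noteq> e \<Longrightarrow> (mon (single i 1 + g) :: 'k mpoly) \<in> ideal_pow N I t"
proof -
  have J: "is_ideal N (ideal_pow N I t)"
    using I by (simp add: monomial_ideal_def is_ideal_ideal_pow)
  obtain r where r: "r \<in> PR N" "r \<notin> ideal_pow N I t"
    and r_Var: "\<And>i. i \<in> S \<Longrightarrow> i \<noteq> e \<Longrightarrow> Var i * r \<in> ideal_pow N I t"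
    using Ass_obtains_witness[OF P(1)] P(2) by metis
  then obtain \<gamma> where \<gamma>: "\<gamma> \<in> keys r" "(mon \<gamma> :: 'k mpoly) \<notin> ideal_pow N I t"
    using in_ideal_if_keys[OF J] by blast
  define g where "g = Poly_Mapping.update e 0 \<gamma>"
  show ?thesis
  proof (rule that)
    show "g \<in> exps N"
      unfolding g_def using exps_if_mon_dvd[OF mon_dvd_update_self keys_in_exps[OF r(1) \<gamma>(1)]] .
    show "lookup g e = 0"
      by (simp add: g_def lookup_update)
    show "(mon g :: 'k mpoly) \<notin> ideal_pow N I t"
      using \<gamma> mon_in_ideal_if_mon_dvd[OF J _ keys_in_exps[OF r(1) \<gamma>(1)] mon_dvd_update_self]
      unfolding g_def by blast
    fix i assume "i \<in> S" "i \<noteq> e"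
    have "single i 1 + \<gamma> \<in> keys (Var i * r)"
      using \<gamma>(1) by (simp add: Var_def keys_mon_mult)
    then have "(mon (Poly_Mapping.update e 0 (single i 1 + \<gamma>)) :: 'k mpoly) \<in> ideal_pow N I t"
      using mon_update_in_ideal_pow[OF I sat r_Var[OF \<open>i \<in> S\<close> \<open>i \<noteq> e\<close>]] by blast
    moreover have "Poly_Mapping.update e 0 (single i 1 + \<gamma>) = single i 1 + g"
      using \<open>i \<noteq> e\<close> by (intro poly_mapping_eqI) (simp add: g_def lookup_update lookup_add lookup_single)
    ultimately show "(mon (single i 1 + g) :: 'k mpoly) \<in> ideal_pow N I t"
      by simp
  qed
qed

lemma gen_Var_in_Ass_ideal_pow_L_ideal:
  fixes I :: "'k::field mpoly set"
  assumes I: "monomial_ideal N I"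
    and sat: "\<forall>c. mon c \<in> (mingens N I :: 'k mpoly set) \<longrightarrow> mon_coprime c (single e 1)"
    and e: "e \<in> {1..N}" and a: "a \<in> exps N" "a \<noteq> 0" and b: "(mon b :: 'k mpoly) \<in> I"
    and ab: "lookup (a + b) e = 0"
    and P: "P \<in> Ass N (ideal_pow N I t)" "\<And>i. i \<in> {1..N} \<Longrightarrow> i \<noteq> e \<Longrightarrow> Var i \<in> P"
  shows "gen N {Var i | i. i \<in> {1..N}} \<in> Ass N (ideal_pow N (L_ideal N e I (a + b)) (Suc t))"
proof -
  have I': "is_ideal N I"
    using I by (simp add: monomial_ideal_def)
  obtain g where g: "g \<in> exps N" "lookup g e = 0" "(mon g :: 'k mpoly) \<notin> ideal_pow N I t"
    and g_Var: "\<And>i. i \<in> {1..N} \<Longrightarrow> i \<noteq> e \<Longrightarrow> (mon (single i 1 + g) :: 'k mpoly) \<in> ideal_pow N I t"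
    using Ass_ideal_pow_obtains_var_free_witness[OF I sat P] by blast
  have b': "b \<in> exps N"
    using exps_if_mon_in_ideal[OF I' b] .
  have h: "a + b \<in> exps N" "lookup (a + b) e = 0" "(mon (a + b) :: 'k mpoly) \<in> I"
    using exps_add[OF a(1) b'] ab ideal_mult_left[OF I' _ b, of "mon a"] a(1) by (simp_all add: mon_mult)
  obtain j where j: "j \<in> keys a" "mon_dvd (single j 1) a"
    using ex_single_mon_dvd[OF a(2)] by blast
  have "j \<in> {1..N}"
    using j(1) a(1) unfolding exps_def by blast
  moreover have "j \<noteq> e"
    using j(1) ab by (auto simp: lookup_add in_keys_iff)
  ultimately have "(mon (a + g) :: 'k mpoly) \<in> ideal_pow N I t"
    using mon_in_ideal_if_mon_dvd[OF is_ideal_ideal_pow[OF I'] g_Var exps_add[OF a(1) g(1)]] j(2)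
    by (simp add: mon_dvd_def lookup_add)
  then have "(mon (a + g) * mon b :: 'k mpoly) \<in> ideal_pow N I (Suc t)"
    using b by (rule ideal_pow_Suc_mult)
  then have gh: "(mon (g + (a + b)) :: 'k mpoly) \<in> ideal_pow N I (Suc t)"
    by (simp add: mon_mult ac_simps del: ideal_pow.simps)
  show ?thesis
  proof (rule gen_Var_in_Ass)
    show "is_ideal N (ideal_pow N (L_ideal N e I (a + b)) (Suc t))"
      using I' e h(1) by (intro is_ideal_ideal_pow is_ideal_L_ideal)
    show "mon (single e t + g + (a + b)) \<in> PR N"
      using e g(1) h(1) by (simp add: exps_add single_in_exps)
    show "mon (single e t + g + (a + b)) \<notin> ideal_pow N (L_ideal N e I (a + b)) (Suc t)"
      by (rule mon_notin_ideal_pow_L_ideal[OF I sat e h g])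
    show "Var i * mon (single e t + g + (a + b)) \<in> ideal_pow N (L_ideal N e I (a + b)) (Suc t)"
      if "i \<in> {1..N}" for i
      using Var_mult_in_ideal_pow_L_ideal[OF I' e h(1) gh] g_Var that by blast
  qed
qed

theorem proposition3p1:
  fixes n t :: nat and I :: "('k::field) mpoly set" and a b :: "nat \<Rightarrow>\<^sub>0 nat"
  assumes "monomial_ideal (n+1) I"
    and "\<forall>c. mon c \<in> (mingens (n+1) I :: 'k mpoly set) \<longrightarrow> mon_coprime c (Poly_Mapping.single (n+1) 1)"
    and "a \<in> exps (n+1)" and "a \<noteq> 0"
    and "(mon b :: 'k mpoly) \<in> mingens (n+1) I"
    and "mon_coprime (a + b) (Poly_Mapping.single (n+1) 1)"
    and "t \<ge> 1"
    and "gen (n+1) {Var i | i. i \<in> {1..n}} \<in> Ass (n+1) (ideal_pow (n+1) I t)"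
  shows "gen (n+1) {Var i | i. i \<in> {1..n+1}}
           \<in> Ass (n+1) (ideal_pow (n+1)
                 (gen (n+1) ((\<lambda>u. Var (n+1) * u) ` I \<union> {mon (a + b)})) (t+1))"
proof -
  have "(mon b :: 'k mpoly) \<in> I"
    using assms(5) by (auto simp: mingens_def)
  moreover have "lookup (a + b) (n + 1) = 0"
    using assms(6) mon_coprime_single_iff by blast
  moreover have "Var i \<in> gen (n + 1) {Var i | i. i \<in> {1..n}}" if "i \<in> {1..n+1}" "i \<noteq> n + 1" for i
    using that by (intro subsetD[OF gen_subset]) auto
  ultimately have "gen (n+1) {Var i | i. i \<in> {1..n+1}}
      \<in> Ass (n+1) (ideal_pow (n+1) (L_ideal (n+1) (n+1) I (a + b)) (Suc t))"
    using assms(3,4,8) by (intro gen_Var_in_Ass_ideal_pow_L_ideal[OF assms(1,2)]) auto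
  then show ?thesis
    by (simp only: L_ideal_def Suc_eq_plus1)
qed

end
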